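(* Fix a constant $0<\alpha<1$. For $D\le \alpha n$ and $0<k\le D$, the minimum size of advice sufficient to perform topology recognition in time $D-k$ in the class of graphs of size $n$ and diameter $D$ is in $\Theta((n^2\log n)/(D-k+1))$ (the upper bound holds for labeled topology recognition and the lower bound for anonymous topology recognition), with constants depending only on $\alpha$.
   Context: Graphs are finite, simple, undirected, connected, with no node labels; at each node of degree $d$ the incident edges carry distinct port numbers $0,\dots,d-1$ (no coherence between endpoints). Isomorphism is a bijection of nodes preserving edges and port numbers at both endpoints. Size = number of nodes; $\log$ is base 2. Communication model (LOCAL): synchronous rounds, all nodes start simultaneously; in each round every node may send arbitrary messages to all neighbours, receives their messages (knowing the arrival port), and performs arbitrary local computation. Initially a node knows only its degree and its advice. Advice: an oracle knowing the graph assigns each node a binary string; the size of advice is the maximum string length. All nodes run the same deterministic algorithm. Anonymous topology recognition: every node outputs a port-labeled graph isomorphic to $G$. Labeled topology recognition: all nodes output the same port-labeled graph $H$ with distinct node labels and each node its own label, such that some isomorphism $G\to H$ maps every node to the node carrying the label it output. The minimum size of advice sufficient for time $T$ on a class is the least $s$ such that some deterministic algorithm and, for each graph of the class, some advice assignment of size at most $s$ accomplish the task within $T$ rounds on every graph of the class. *)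

theory Defs
  imports Complex_Main
begin

text \<open>A port-labeled graph has nodes 0..<pg_n. Node u has degree pg_deg u, and
  pg_nbr u i is the neighbour reached from u via port i (for i < pg_deg u).\<close>

record pgraph =
  pg_n   :: nat
  pg_deg :: "nat \<Rightarrow> nat"
  pg_nbr :: "nat \<Rightarrow> nat \<Rightarrow> nat"

definition adj :: "pgraph \<Rightarrow> nat \<Rightarrow> nat \<Rightarrow> bool" where
  "adj G u v \<longleftrightarrow> u < pg_n G \<and> v < pg_n G \<and> (\<exists>i < pg_deg G u. pg_nbr G u i = v)"

definition connected_pg :: "pgraph \<Rightarrow> bool" where
  "connected_pg G \<longleftrightarrow> (\<forall>u < pg_n G. \<forall>v < pg_n G. (adj G)\<^sup>*\<^sup>* u v)"

definition wf_pgraph :: "pgraph \<Rightarrow> bool" where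
  "wf_pgraph G \<longleftrightarrow>
     (\<forall>u < pg_n G. \<forall>i < pg_deg G u. pg_nbr G u i < pg_n G \<and> pg_nbr G u i \<noteq> u) \<and>
     (\<forall>u < pg_n G. inj_on (pg_nbr G u) {..<pg_deg G u}) \<and>
     (\<forall>u < pg_n G. \<forall>i < pg_deg G u. \<exists>j < pg_deg G (pg_nbr G u i). pg_nbr G (pg_nbr G u i) j = u) \<and>
     connected_pg G"

definition dist_pg :: "pgraph \<Rightarrow> nat \<Rightarrow> nat \<Rightarrow> nat" where
  "dist_pg G u v = (LEAST d. (adj G ^^ d) u v)"

definition diameter_pg :: "pgraph \<Rightarrow> nat" where
  "diameter_pg G = Max {dist_pg G u v | u v. u < pg_n G \<and> v < pg_n G}"

definition pg_iso :: "pgraph \<Rightarrow> pgraph \<Rightarrow> (nat \<Rightarrow> nat) \<Rightarrow> bool" where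
  "pg_iso G H f \<longleftrightarrow> pg_n H = pg_n G \<and> bij_betw f {..<pg_n G} {..<pg_n H} \<and>
     (\<forall>u < pg_n G. pg_deg H (f u) = pg_deg G u \<and>
        (\<forall>i < pg_deg G u. pg_nbr H (f u) i = f (pg_nbr G u i)))"

definition graph_class :: "nat \<Rightarrow> nat \<Rightarrow> pgraph set" where
  "graph_class n D = {G. wf_pgraph G \<and> pg_n G = n \<and> diameter_pg G = D}"

text \<open>Universal data type for local states and messages (arbitrary finite data).\<close>
datatype dat = DNat nat | DList "dat list"

text \<open>A deterministic algorithm: initial state from degree and advice, a message per
  outgoing port, a state transition from the messages received indexed by arrival port,
  and a final node_output (a port-labeled graph and a node label).\<close>
record algo =
  a_init  :: "nat \<Rightarrow> bool list \<Rightarrow> dat"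
  a_send  :: "dat \<Rightarrow> nat \<Rightarrow> dat"
  a_trans :: "dat \<Rightarrow> dat list \<Rightarrow> dat"
  a_out   :: "dat \<Rightarrow> pgraph \<times> nat"

definition rport :: "pgraph \<Rightarrow> nat \<Rightarrow> nat \<Rightarrow> nat" where
  "rport G v i = (THE j. j < pg_deg G (pg_nbr G v i) \<and> pg_nbr G (pg_nbr G v i) j = v)"

fun run :: "algo \<Rightarrow> pgraph \<Rightarrow> (nat \<Rightarrow> bool list) \<Rightarrow> nat \<Rightarrow> nat \<Rightarrow> dat" where
  "run A G adv 0 v = a_init A (pg_deg G v) (adv v)"
| "run A G adv (Suc t) v =
     a_trans A (run A G adv t v)
       (map (\<lambda>i. a_send A (run A G adv t (pg_nbr G v i)) (rport G v i)) [0..<pg_deg G v])"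

definition node_output :: "algo \<Rightarrow> pgraph \<Rightarrow> (nat \<Rightarrow> bool list) \<Rightarrow> nat \<Rightarrow> nat \<Rightarrow> pgraph \<times> nat" where
  "node_output A G adv T v = a_out A (run A G adv T v)"

definition advice_size :: "pgraph \<Rightarrow> (nat \<Rightarrow> bool list) \<Rightarrow> nat" where
  "advice_size G adv = Max ((\<lambda>v. length (adv v)) ` {..<pg_n G})"

definition anon_TR :: "algo \<Rightarrow> pgraph \<Rightarrow> (nat \<Rightarrow> bool list) \<Rightarrow> nat \<Rightarrow> bool" where
  "anon_TR A G adv T \<longleftrightarrow> (\<forall>v < pg_n G. \<exists>f. pg_iso G (fst (node_output A G adv T v)) f)"

text \<open>Labeled topology recognition within T rounds: all nodes node_output the same H
  (whose nodes 0..<n serve as distinct labels) and each node its own label.\<close>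
definition labeled_TR :: "algo \<Rightarrow> pgraph \<Rightarrow> (nat \<Rightarrow> bool list) \<Rightarrow> nat \<Rightarrow> bool" where
  "labeled_TR A G adv T \<longleftrightarrow>
     (\<exists>H f. pg_iso G H f \<and> (\<forall>v < pg_n G. node_output A G adv T v = (H, f v)))"

definition min_advice ::
  "(algo \<Rightarrow> pgraph \<Rightarrow> (nat \<Rightarrow> bool list) \<Rightarrow> nat \<Rightarrow> bool) \<Rightarrow> pgraph set \<Rightarrow> nat \<Rightarrow> nat" where
  "min_advice task C T =
     (LEAST s. \<exists>A. \<forall>G \<in> C. \<exists>adv. advice_size G adv \<le> s \<and> task A G adv T)"

end

theory Submission
  imports Defs "HOL-Library.FuncSet" "HOL-Combinatorics.Permutations"
begin

(* Upper bound: fix an end r of a diametral path and let m = T div 2 + 1.  Every node v is told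
   its own label, the residue of dist(r, v) modulo m, and the adjacency rows of all nodes whose
   label has that same residue; these are about n/m rows of n numbers of log n bits each.  Within
   T rounds every node sees nodes of all m distance residues (on a shortest path towards r, or
   beyond r along the diametral path), hence learns every row and reconstructs the labeled graph.

   Lower bound: a path 0, ..., D-1 is attached at D-1 to a clique on the remaining n - D nodes,
   and the ports at the clique nodes are numbered by arbitrary permutations, giving
   (n-D-1)!^(n-D) graphs of diameter D.  In T < D rounds node 0 only sees the advice of nodes
   0..T on the common path, and its output determines the graph up to one of n! relabelings.
   Hence 2^((s+1)(T+1)) n! >= (n-D-1)!^(n-D), i.e. s (T+1) = Omega(n^2 log n). *)

section \<open>Fixed-width binary encoding of number lists\<close>

fun bits_of_nat :: "nat \<Rightarrow> nat \<Rightarrow> bool list" where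
  "bits_of_nat 0 x = []"
| "bits_of_nat (Suc w) x = odd x # bits_of_nat w (x div 2)"

fun nat_of_bits :: "bool list \<Rightarrow> nat" where
  "nat_of_bits [] = 0"
| "nat_of_bits (b # bs) = (if b then 1 else 0) + 2 * nat_of_bits bs"

lemma length_bits_of_nat [simp]: "length (bits_of_nat w x) = w"
  by (induction w arbitrary: x) auto

lemma nat_of_bits_bits_of_nat: "nat_of_bits (bits_of_nat w x) = x mod 2 ^ w"
proof (induction w arbitrary: x)
  case 0 then show ?case by simp
next
  case (Suc w)
  have "x mod 2 ^ Suc w = x mod 2 + 2 * ((x div 2) mod 2 ^ w)"
    by (simp add: mod_mult2_eq mult.commute)
  then show ?case using Suc by (auto simp: odd_iff_mod_2_eq_one)
qed

definition encode_fields :: "nat \<Rightarrow> nat list \<Rightarrow> bool list" where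
  "encode_fields w xs = concat (map (bits_of_nat w) xs)"

definition get_field :: "nat \<Rightarrow> bool list \<Rightarrow> nat \<Rightarrow> nat" where
  "get_field w bs p = nat_of_bits (take w (drop (p * w) bs))"

lemma length_encode_fields: "length (encode_fields w xs) = w * length xs"
  by (induction xs) (auto simp: encode_fields_def)

lemma drop_concat_map_const_length:
  assumes "\<forall>x\<in>set xs. length (f x) = w" "i \<le> length xs"
  shows "drop (i * w) (concat (map f xs)) = concat (map f (drop i xs))"
  using assms
proof (induction xs arbitrary: i)
  case Nil then show ?case by simp
next
  case (Cons x xs)
  then show ?case by (cases i) (simp_all add: add.commute)
qed

lemma nth_concat_map_const_length:
  assumes "\<forall>x\<in>set xs. length (f x) = b" "i < length xs" "j < b"
  shows "concat (map f xs) ! (i * b + j) = f (xs ! i) ! j"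
  using assms
proof (induction xs arbitrary: i)
  case Nil then show ?case by simp
next
  case (Cons x xs)
  then show ?case by (cases i) (simp_all add: nth_append algebra_simps)
qed

lemma get_field_encode_fields:
  assumes "p < length xs" "xs ! p < 2 ^ w"
  shows "get_field w (encode_fields w xs) p = xs ! p"
proof -
  have "drop (p * w) (encode_fields w xs) = concat (map (bits_of_nat w) (drop p xs))"
    unfolding encode_fields_def using assms by (intro drop_concat_map_const_length) auto
  moreover have "drop p xs = xs ! p # drop (Suc p) xs"
    using assms by (simp add: Cons_nth_drop_Suc)
  ultimately show ?thesis
    unfolding get_field_def using assms(2) by (simp add: nat_of_bits_bits_of_nat)
qed

definition dat_of_bits :: "bool list \<Rightarrow> dat" where
  "dat_of_bits bs = DList (map (\<lambda>b. DNat (if b then 1 else 0)) bs)"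

fun bits_of_dat :: "dat \<Rightarrow> bool list" where
  "bits_of_dat (DList ds) = map (\<lambda>d. d = DNat 1) ds"
| "bits_of_dat (DNat _) = []"

lemma bits_of_dat_dat_of_bits [simp]: "bits_of_dat (dat_of_bits bs) = bs"
  by (induction bs) (auto simp: dat_of_bits_def)

fun dat_items :: "dat \<Rightarrow> dat list" where
  "dat_items (DList xs) = xs"
| "dat_items (DNat _) = []"

section \<open>Distances in port-labeled graphs\<close>

lemma wf_pgraph_nbr:
  assumes "wf_pgraph G" "u < pg_n G" "i < pg_deg G u"
  shows "pg_nbr G u i < pg_n G" "pg_nbr G u i \<noteq> u"
  using assms unfolding wf_pgraph_def by auto

lemma wf_pgraph_deg_less:
  assumes "wf_pgraph G" "u < pg_n G"
  shows "pg_deg G u < pg_n G"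
proof -
  have inj: "inj_on (pg_nbr G u) {..<pg_deg G u}" using assms unfolding wf_pgraph_def by auto
  have "pg_nbr G u ` {..<pg_deg G u} \<subseteq> {..<pg_n G} - {u}" using wf_pgraph_nbr[OF assms] by auto
  from card_inj_on_le[OF inj this] have "pg_deg G u \<le> card ({..<pg_n G} - {u})" by simp
  also have "\<dots> = pg_n G - 1" using assms(2) by simp
  finally show ?thesis using assms(2) by simp
qed

lemma relpowp_adj_sym:
  assumes "wf_pgraph G" "(adj G ^^ j) u v" shows "(adj G ^^ j) v u"
  using assms(2)
proof (induction j arbitrary: v)
  case 0 then show ?case by simp
next
  case (Suc j)
  then obtain z where "(adj G ^^ j) u z" "adj G z v" by (auto elim: relpowp_Suc_E)
  moreover have "adj G v z" using \<open>adj G z v\<close> assms(1) unfolding adj_def wf_pgraph_def by blast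
  ultimately show ?case using Suc.IH by (meson relpowp_Suc_I2)
qed

lemma relpowp_adj_less:
  assumes "(adj G ^^ j) v z" "v < pg_n G" shows "z < pg_n G"
  using assms
proof (induction j arbitrary: z)
  case 0 then show ?case by simp
next
  case (Suc j)
  then obtain y where "(adj G ^^ j) v y" "adj G y z" by (auto elim: relpowp_Suc_E)
  then show ?case unfolding adj_def by auto
qed

lemma relpowp_dist_pg:
  assumes "wf_pgraph G" "u < pg_n G" "v < pg_n G"
  shows "(adj G ^^ dist_pg G u v) u v"
proof -
  have "\<exists>d. (adj G ^^ d) u v"
    using assms unfolding wf_pgraph_def connected_pg_def by (meson rtranclp_imp_relpowp)
  then show ?thesis unfolding dist_pg_def by (rule LeastI_ex)
qed

lemma dist_pg_le: "(adj G ^^ d) u v \<Longrightarrow> dist_pg G u v \<le> d"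
  unfolding dist_pg_def by (rule Least_le)

lemma dist_pg_sym:
  assumes "wf_pgraph G" "u < pg_n G" "v < pg_n G"
  shows "dist_pg G u v = dist_pg G v u"
  using dist_pg_le[OF relpowp_adj_sym[OF assms(1) relpowp_dist_pg[OF assms]]]
        dist_pg_le[OF relpowp_adj_sym[OF assms(1) relpowp_dist_pg[OF assms(1,3,2)]]] by simp

lemma dist_pg_triangle:
  assumes "wf_pgraph G" "u < pg_n G" "v < pg_n G" "w < pg_n G"
  shows "dist_pg G u w \<le> dist_pg G u v + dist_pg G v w"
proof -
  have "(adj G ^^ (dist_pg G u v + dist_pg G v w)) u w"
    using relpowp_dist_pg[OF assms(1,2,3)] relpowp_dist_pg[OF assms(1,3,4)] by (auto simp: relpowp_add)
  then show ?thesis by (rule dist_pg_le)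
qed

lemma finite_dist_pg_values: "finite {dist_pg G u v | u v. u < pg_n G \<and> v < pg_n G}"
proof -
  have "{dist_pg G u v | u v. u < pg_n G \<and> v < pg_n G}
      = (\<lambda>(u, v). dist_pg G u v) ` ({..<pg_n G} \<times> {..<pg_n G})" by auto
  then show ?thesis by simp
qed

lemma diameter_pg_attained:
  assumes "0 < pg_n G"
  obtains r w where "r < pg_n G" "w < pg_n G" "dist_pg G r w = diameter_pg G"
proof -
  have "{dist_pg G u v | u v. u < pg_n G \<and> v < pg_n G} \<noteq> {}" using assms by auto
  from Max_in[OF finite_dist_pg_values this] show ?thesis
    using that unfolding diameter_pg_def by auto
qed

lemma diameter_pg_eqI:
  assumes "u < pg_n G" "v < pg_n G" "dist_pg G u v = D"
    and "\<And>u v. u < pg_n G \<Longrightarrow> v < pg_n G \<Longrightarrow> dist_pg G u v \<le> D"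
  shows "diameter_pg G = D"
  unfolding diameter_pg_def using assms by (intro Max_eqI finite_dist_pg_values) auto

lemma shortest_path_point:
  assumes "wf_pgraph G" "v < pg_n G" "r < pg_n G" "x \<le> dist_pg G v r"
  shows "\<exists>u < pg_n G. (adj G ^^ (dist_pg G v r - x)) v u \<and> dist_pg G r u = x"
proof -
  define d where "d = dist_pg G v r"
  have "(adj G ^^ ((d - x) + x)) v r" using relpowp_dist_pg[OF assms(1-3)] assms(4) by (simp add: d_def)
  then obtain z where z: "(adj G ^^ (d - x)) v z" "(adj G ^^ x) z r" by (auto simp: relpowp_add)
  have zn: "z < pg_n G" using relpowp_adj_less[OF z(1) assms(2)] .
  have "d \<le> (d - x) + dist_pg G z r"
    using dist_pg_triangle[OF assms(1,2) zn assms(3)] dist_pg_le[OF z(1)] unfolding d_def by linarith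
  then have "dist_pg G z r = x" using dist_pg_le[OF z(2)] assms(4) unfolding d_def by linarith
  then show ?thesis using z zn dist_pg_sym[OF assms(1) zn assms(3)] unfolding d_def by auto
qed

section \<open>Flooding\<close>

definition flooding_algo :: "(dat \<Rightarrow> pgraph \<times> nat) \<Rightarrow> algo" where
  "flooding_algo out =
     \<lparr>a_init = (\<lambda>d bs. DList [dat_of_bits bs]),
      a_send = (\<lambda>s p. s),
      a_trans = (\<lambda>s ms. DList (dat_items s @ concat (map dat_items ms))),
      a_out = out\<rparr>"

lemma run_flooding_0 [simp]: "run (flooding_algo out) G adv 0 v = DList [dat_of_bits (adv v)]"
  by (simp add: flooding_algo_def)

lemma dat_items_run_flooding_Suc [simp]:
  "dat_items (run (flooding_algo out) G adv (Suc t) v) =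
     dat_items (run (flooding_algo out) G adv t v) @
     concat (map (\<lambda>i. dat_items (run (flooding_algo out) G adv t (pg_nbr G v i))) [0..<pg_deg G v])"
  by (simp add: flooding_algo_def o_def)

context notes run.simps [simp del]
begin

lemma node_output_flooding:
  "node_output (flooding_algo out) G adv T v = out (run (flooding_algo out) G adv T v)"
  by (simp add: node_output_def flooding_algo_def)

lemma flooding_items_hd:
  "\<exists>rest. dat_items (run (flooding_algo out) G adv t v) = dat_of_bits (adv v) # rest"
  by (induction t) auto

lemma flooding_items_subset:
  assumes "wf_pgraph G" "v < pg_n G"
  shows "set (dat_items (run (flooding_algo out) G adv t v)) \<subseteq> dat_of_bits ` adv ` {..<pg_n G}"
  using assms(2)
proof (induction t arbitrary: v)
  case 0 then show ?case by auto
next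
  case (Suc t)
  have "set (dat_items (run (flooding_algo out) G adv t (pg_nbr G v i)))
      \<subseteq> dat_of_bits ` adv ` {..<pg_n G}" if "i < pg_deg G v" for i
    using Suc.IH wf_pgraph_nbr[OF assms(1) Suc.prems that] by blast
  then show ?case using Suc by fastforce
qed

lemma flooding_items_complete:
  assumes "(adj G ^^ j) v u" "j \<le> t"
  shows "dat_of_bits (adv u) \<in> set (dat_items (run (flooding_algo out) G adv t v))"
  using assms
proof (induction t arbitrary: v j)
  case 0
  then show ?case by auto
next
  case (Suc t)
  show ?case
  proof (cases j)
    case 0
    then show ?thesis using Suc.prems flooding_items_hd[of out G adv "Suc t" u]
      by (metis list.set_intros(1) relpowp_0_E)
  next
    case (Suc j')
    then obtain z where z: "adj G v z" "(adj G ^^ j') z u" using Suc.prems(1) by (metis relpowp_Suc_D2)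
    then obtain i where "i < pg_deg G v" "pg_nbr G v i = z" unfolding adj_def by auto
    moreover have "dat_of_bits (adv u) \<in> set (dat_items (run (flooding_algo out) G adv t z))"
      using Suc.IH z(2) Suc.prems(2) \<open>j = Suc j'\<close> by auto
    ultimately show ?thesis by force
  qed
qed

end

section \<open>Upper bound\<close>

lemma exists_mod_eq_in_window:
  assumes "0 < (m::nat)" "c < m"
  shows "\<exists>x. a \<le> x \<and> x < a + m \<and> x mod m = c"
proof (intro exI conjI)
  show "a \<le> a + (c + m - a mod m) mod m" by simp
  show "a + (c + m - a mod m) mod m < a + m" using assms(1) by simp
  have "(a + (c + m - a mod m) mod m) mod m = (a mod m + (c + m - a mod m)) mod m"
    by (simp add: mod_simps)
  also have "a mod m + (c + m - a mod m) = c + m" using assms(1) mod_less_divisor[of m a] by linarith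
  finally show "(a + (c + m - a mod m) mod m) mod m = c" using assms by simp
qed

lemma residue_within_reach:
  assumes wf: "wf_pgraph G" and r: "r < pg_n G" and w: "w < pg_n G"
    and rw: "dist_pg G r w = D" and TD: "T < D" and m: "m = T div 2 + 1"
    and v: "v < pg_n G" and c: "c < m"
  shows "\<exists>u < pg_n G. \<exists>j \<le> T. (adj G ^^ j) v u \<and> dist_pg G r u mod m = c"
proof -
  define d where "d = dist_pg G v r"
  consider "T \<le> d" | "c \<le> d" "d < T" | "d < c" "d < T" by linarith
  then show ?thesis
  proof cases
    case 1
    obtain x where x: "d - T \<le> x" "x < d - T + m" "x mod m = c"
      using exists_mod_eq_in_window[of m c "d - T"] m c by auto
    then have "x \<le> d" using 1 m by linarith
    then obtain u where "u < pg_n G" "(adj G ^^ (d - x)) v u" "dist_pg G r u = x"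
      using shortest_path_point[OF wf v r] unfolding d_def by blast
    then show ?thesis using x by (intro exI[of _ u] conjI exI[of _ "d - x"]) auto
  next
    case 2
    then obtain u where "u < pg_n G" "(adj G ^^ (d - c)) v u" "dist_pg G r u = c"
      using shortest_path_point[OF wf v r] unfolding d_def by blast
    then show ?thesis using 2 c by (intro exI[of _ u] conjI exI[of _ "d - c"]) auto
  next
    case 3
    \<comment> \<open>go to r, then c steps along the diametral path; d + c < 2 c \<le> T\<close>
    have "c < D" using c m TD by linarith
    then have "(adj G ^^ (c + (D - c))) r w" using relpowp_dist_pg[OF wf r w] rw by simp
    then obtain z where z: "(adj G ^^ c) r z" "(adj G ^^ (D - c)) z w" by (auto simp: relpowp_add)
    have zn: "z < pg_n G" using relpowp_adj_less[OF z(1) r] .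
    have "D \<le> dist_pg G r z + (D - c)"
      using dist_pg_triangle[OF wf r zn w] dist_pg_le[OF z(2)] rw by linarith
    then have dz: "dist_pg G r z = c" using dist_pg_le[OF z(1)] \<open>c < D\<close> by linarith
    have "(adj G ^^ (d + c)) v z"
      using relpowp_dist_pg[OF wf v r] z(1) unfolding d_def by (auto simp: relpowp_add)
    moreover have "d + c \<le> T" using 3 c m by linarith
    ultimately show ?thesis using zn dz c by (intro exI[of _ z] conjI exI[of _ "d + c"]) auto
  qed
qed

(* A decoder can only rebuild the values on valid nodes and ports; this is the representative it
   outputs. *)
definition pg_normalize :: "pgraph \<Rightarrow> pgraph" where
  "pg_normalize G = \<lparr>pg_n = pg_n G, pg_deg = (\<lambda>u. if u < pg_n G then pg_deg G u else 0),
     pg_nbr = (\<lambda>u i. if u < pg_n G \<and> i < pg_deg G u then pg_nbr G u i else 0)\<rparr>"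

lemma pg_iso_pg_normalize: "pg_iso G (pg_normalize G) id"
  unfolding pg_iso_def pg_normalize_def by auto

definition adjacency_row :: "pgraph \<Rightarrow> nat \<Rightarrow> nat list" where
  "adjacency_row G u = (if u < pg_n G then pg_deg G u else 0) #
     map (\<lambda>i. if u < pg_n G \<and> i < pg_deg G u then pg_nbr G u i else 0) [0..<pg_n G]"

definition class_rows :: "pgraph \<Rightarrow> nat \<Rightarrow> nat \<Rightarrow> nat list" where
  "class_rows G m c = concat (map (\<lambda>q. adjacency_row G (q * m + c)) [0..<pg_n G div m + 1])"

definition residue_advice :: "pgraph \<Rightarrow> nat \<Rightarrow> nat \<Rightarrow> nat \<Rightarrow> nat \<Rightarrow> bool list"
  where
  "residue_advice G m r w v =
     encode_fields w (v # (dist_pg G r v mod m) # class_rows G m (dist_pg G r v mod m))"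

definition lookup_row :: "nat \<Rightarrow> nat \<Rightarrow> nat \<Rightarrow> bool list list \<Rightarrow> nat \<Rightarrow> nat \<Rightarrow> nat"
  where "lookup_row n m w advs u slot =
    get_field w (the (find (\<lambda>bs. get_field w bs 1 = u mod m) advs)) ((u div m) * (n + 1) + slot + 2)"

definition decode_graph :: "nat \<Rightarrow> nat \<Rightarrow> nat \<Rightarrow> bool list list \<Rightarrow> pgraph" where
  "decode_graph n m w advs =
     \<lparr>pg_n = n,
      pg_deg = (\<lambda>u. if u < n then lookup_row n m w advs u 0 else 0),
      pg_nbr = (\<lambda>u i. if u < n \<and> i < lookup_row n m w advs u 0
                      then lookup_row n m w advs u (Suc i) else 0)\<rparr>"

definition residue_output :: "nat \<Rightarrow> nat \<Rightarrow> nat \<Rightarrow> dat \<Rightarrow> pgraph \<times> nat" where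
  "residue_output n m w s =
     (decode_graph n m w (map bits_of_dat (dat_items s)),
      get_field w (bits_of_dat (hd (dat_items s))) 0)"

lemma length_adjacency_row [simp]: "length (adjacency_row G u) = pg_n G + 1"
  by (simp add: adjacency_row_def)

lemma length_class_rows: "length (class_rows G m c) = (pg_n G div m + 1) * (pg_n G + 1)"
proof -
  have "length (concat (map (\<lambda>q. adjacency_row G (q * m + c)) xs)) = length xs * (pg_n G + 1)" for xs
    by (induction xs) auto
  then show ?thesis unfolding class_rows_def by simp
qed

lemma adjacency_row_less:
  assumes "wf_pgraph G" "0 < pg_n G" "x \<in> set (adjacency_row G u)"
  shows "x < pg_n G"
  using assms wf_pgraph_deg_less[OF assms(1)] wf_pgraph_nbr[OF assms(1)] unfolding adjacency_row_def
  by (auto split: if_splits)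

lemma length_residue_advice:
  "length (residue_advice G m r w v) = w * (2 + (pg_n G div m + 1) * (pg_n G + 1))"
  by (simp add: residue_advice_def length_encode_fields length_class_rows)

lemma get_field_residue_advice_label:
  assumes "v < 2 ^ w" shows "get_field w (residue_advice G m r w v) 0 = v"
  unfolding residue_advice_def using assms by (subst get_field_encode_fields) auto

lemma get_field_residue_advice_class:
  assumes "0 < m" "m \<le> pg_n G" "pg_n G < 2 ^ w"
  shows "get_field w (residue_advice G m r w v) 1 = dist_pg G r v mod m"
proof -
  have "dist_pg G r v mod m < m" using assms(1) by simp
  then have "dist_pg G r v mod m < 2 ^ w" using assms(2,3) by linarith
  then show ?thesis unfolding residue_advice_def using assms by (subst get_field_encode_fields) auto
qed

lemma get_field_class_rows:
  assumes wf: "wf_pgraph G" and m: "0 < m" "m \<le> pg_n G" and w: "pg_n G < 2 ^ w"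
    and u: "u < pg_n G" and slot: "slot \<le> pg_n G"
  shows "get_field w (encode_fields w (v # (u mod m) # class_rows G m (u mod m)))
            ((u div m) * (pg_n G + 1) + slot + 2)
       = adjacency_row G u ! slot"
proof -
  let ?n = "pg_n G"
  have ud: "u div m < ?n div m + 1" using u by (simp add: div_le_mono less_Suc_eq_le)
  have "class_rows G m (u mod m) ! ((u div m) * (?n + 1) + slot)
      = adjacency_row G ((u div m) * m + u mod m) ! slot"
    unfolding class_rows_def using ud slot
    by (subst nth_concat_map_const_length[where b = "?n + 1"]) (auto simp del: upt_Suc)
  then have row: "class_rows G m (u mod m) ! ((u div m) * (?n + 1) + slot) = adjacency_row G u ! slot"
    by simp
  have "(u div m) * (?n + 1) + slot < (u div m + 1) * (?n + 1)" using slot by simp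
  also have "\<dots> \<le> (?n div m + 1) * (?n + 1)" using ud by (intro mult_right_mono) auto
  finally have len: "(u div m) * (?n + 1) + slot < length (class_rows G m (u mod m))"
    by (simp add: length_class_rows)
  have "adjacency_row G u ! slot < pg_n G"
    using adjacency_row_less[OF wf _ nth_mem] slot u by simp
  then have "adjacency_row G u ! slot < 2 ^ w" using w by linarith
  then show ?thesis using len row by (subst get_field_encode_fields) (auto simp: numeral_2_eq_2)
qed

lemma decode_graph_residue_advice:
  assumes wf: "wf_pgraph G" and m: "0 < m" "m \<le> pg_n G" and w: "pg_n G < 2 ^ w"
    and sound: "\<forall>a\<in>set advs. \<exists>v < pg_n G. a = residue_advice G m r w v"
    and complete: "\<forall>c<m. \<exists>a\<in>set advs. get_field w a 1 = c"
  shows "decode_graph (pg_n G) m w advs = pg_normalize G"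
proof -
  have row: "lookup_row (pg_n G) m w advs u slot = adjacency_row G u ! slot"
    if u: "u < pg_n G" and slot: "slot \<le> pg_n G" for u slot
  proof -
    have "u mod m < m" using m by simp
    then obtain a0 where "a0 \<in> set advs" "get_field w a0 1 = u mod m" using complete by blast
    then have "find (\<lambda>bs. get_field w bs 1 = u mod m) advs \<noteq> None" by (auto simp: find_None_iff)
    then obtain a where a: "find (\<lambda>bs. get_field w bs 1 = u mod m) advs = Some a" by blast
    then have "a \<in> set advs" "get_field w a 1 = u mod m" by (auto simp: find_Some_iff)
    then obtain v where v: "v < pg_n G" "a = residue_advice G m r w v"
      using sound by blast
    have "dist_pg G r v mod m = u mod m"
      using \<open>get_field w a 1 = u mod m\<close> get_field_residue_advice_class[OF m w, of r v] v(2)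
      by simp
    then show ?thesis
      unfolding lookup_row_def a v(2) residue_advice_def
      using get_field_class_rows[OF wf m w u slot] by simp
  qed
  have "lookup_row (pg_n G) m w advs u (Suc i) = pg_nbr G u i"
    if "u < pg_n G" "i < pg_deg G u" for u i
    using row[of u "Suc i"] wf_pgraph_deg_less[OF wf that(1)] that by (simp add: adjacency_row_def)
  moreover have "lookup_row (pg_n G) m w advs u 0 = pg_deg G u" if "u < pg_n G" for u
    using row[of u 0] that by (simp add: adjacency_row_def)
  ultimately show ?thesis unfolding decode_graph_def pg_normalize_def by (auto simp: fun_eq_iff)
qed

lemma node_output_residue_algo:
  assumes wf: "wf_pgraph G" and r: "r < pg_n G" "w' < pg_n G" "dist_pg G r w' = D"
    and TD: "T < D" and m: "m = T div 2 + 1" "m \<le> pg_n G" and w: "pg_n G < 2 ^ w"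
    and v: "v < pg_n G"
  shows "node_output (flooding_algo (residue_output (pg_n G) m w)) G (residue_advice G m r w) T v
       = (pg_normalize G, v)"
proof -
  let ?advs = "map bits_of_dat (dat_items (run (flooding_algo (residue_output (pg_n G) m w)) G
                 (residue_advice G m r w) T v))"
  have sound: "\<forall>a\<in>set ?advs. \<exists>v < pg_n G. a = residue_advice G m r w v"
    using flooding_items_subset[OF wf v] by fastforce
  have complete: "\<forall>c<m. \<exists>a\<in>set ?advs. get_field w a 1 = c"
  proof (intro allI impI)
    fix c assume c: "c < m"
    obtain u j where uj: "u < pg_n G" "j \<le> T" "(adj G ^^ j) v u" "dist_pg G r u mod m = c"
      using residue_within_reach[OF wf r TD m(1) v c] by blast
    have "dat_of_bits (residue_advice G m r w u) \<in> set (dat_items (run (flooding_algo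
        (residue_output (pg_n G) m w)) G (residue_advice G m r w) T v))"
      using flooding_items_complete[OF uj(3,2)] .
    then have "residue_advice G m r w u \<in> set ?advs" by force
    moreover have "get_field w (residue_advice G m r w u) 1 = c"
      using get_field_residue_advice_class[OF _ m(2) w] uj(4) m(1) by simp
    ultimately show "\<exists>a\<in>set ?advs. get_field w a 1 = c" by blast
  qed
  obtain rest where "dat_items (run (flooding_algo (residue_output (pg_n G) m w)) G
      (residue_advice G m r w) T v) = dat_of_bits (residue_advice G m r w v) # rest"
    using flooding_items_hd by blast
  then show ?thesis
    using decode_graph_residue_advice[OF wf _ m(2) w sound complete]
      get_field_residue_advice_label v w m(1)
    by (simp add: node_output_flooding residue_output_def)
qed

lemma labeled_TR_residue_algo:
  assumes wf: "wf_pgraph G" and n: "0 < pg_n G" and D: "diameter_pg G = D" and TD: "T < D"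
    and m: "m = T div 2 + 1" "m \<le> pg_n G" and w: "pg_n G < 2 ^ w"
  shows "\<exists>adv. advice_size G adv \<le> w * (2 + (pg_n G div m + 1) * (pg_n G + 1))
     \<and> labeled_TR (flooding_algo (residue_output (pg_n G) m w)) G adv T"
proof -
  obtain r w' where r: "r < pg_n G" "w' < pg_n G" "dist_pg G r w' = D"
    using diameter_pg_attained[OF n] D by metis
  have "advice_size G (residue_advice G m r w) \<le> w * (2 + (pg_n G div m + 1) * (pg_n G + 1))"
    unfolding advice_size_def using n by (subst Max_le_iff) (auto simp: length_residue_advice)
  moreover have "labeled_TR (flooding_algo (residue_output (pg_n G) m w)) G (residue_advice G m r w) T"
    unfolding labeled_TR_def
    using node_output_residue_algo[OF wf r TD m w] pg_iso_pg_normalize[of G]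
    by (intro exI[of _ "pg_normalize G"] exI[of _ id]) simp
  ultimately show ?thesis by blast
qed

lemma graph_class_labeled_TR_residue:
  assumes n: "0 < n" and TD: "T < D" and Dn: "D < n" and m: "m = T div 2 + 1" and w: "n < 2 ^ w"
  shows "\<forall>G \<in> graph_class n D. \<exists>adv. advice_size G adv \<le> w * (2 + (n div m + 1) * (n + 1))
           \<and> labeled_TR (flooding_algo (residue_output n m w)) G adv T"
proof
  fix G assume "G \<in> graph_class n D"
  then have G: "wf_pgraph G" "pg_n G = n" "diameter_pg G = D" unfolding graph_class_def by auto
  have "m \<le> n" using m TD Dn by linarith
  then show "\<exists>adv. advice_size G adv \<le> w * (2 + (n div m + 1) * (n + 1))
      \<and> labeled_TR (flooding_algo (residue_output n m w)) G adv T"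
    using labeled_TR_residue_algo[OF G(1) _ G(3) TD m] G(2) n w by auto
qed

lemma min_advice_le:
  assumes "\<forall>G \<in> C. \<exists>adv. advice_size G adv \<le> s \<and> task A G adv T"
  shows "min_advice task C T \<le> s"
  unfolding min_advice_def using assms by (intro Least_le) blast

lemma min_advice_attained:
  assumes "\<forall>G \<in> C. \<exists>adv. advice_size G adv \<le> s \<and> task A G adv T"
  obtains A' where
    "\<forall>G \<in> C. \<exists>adv. advice_size G adv \<le> min_advice task C T \<and> task A' G adv T"
proof -
  have "\<exists>A'. \<forall>G \<in> C. \<exists>adv.
      advice_size G adv \<le> min_advice task C T \<and> task A' G adv T"
    unfolding min_advice_def by (rule LeastI_ex) (use assms in blast)
  then show ?thesis using that by blast
qed

lemma labeled_TR_imp_anon_TR: "labeled_TR A G adv T \<Longrightarrow> anon_TR A G adv T"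
  unfolding labeled_TR_def anon_TR_def by (metis fst_conv)

lemma exists_bit_width:
  assumes "2 \<le> n"
  obtains w where "n < 2 ^ w" "real w \<le> 2 * log 2 (real n)"
proof -
  define w where "w = (LEAST w. n < (2::nat) ^ w)"
  have nw: "n < 2 ^ w" unfolding w_def by (rule LeastI_ex) (use less_exp in blast)
  then have "1 \<le> w" using assms by (cases w) auto
  have "\<not> n < 2 ^ (w - 1)" unfolding w_def by (rule not_less_Least) (use \<open>1 \<le> w\<close> w_def in simp)
  then have "real (2 ^ (w - 1)) \<le> real n" by simp
  then have "log 2 (2 ^ (w - 1)) \<le> log 2 (real n)" using assms by (subst log_le_cancel_iff) auto
  then have "real (w - 1) \<le> log 2 (real n)" by (simp add: log_nat_power)
  moreover have "1 \<le> log 2 (real n)" using assms by (simp add: le_log_iff)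
  ultimately show ?thesis using that nw \<open>1 \<le> w\<close> by (simp add: of_nat_diff)
qed

lemma residue_advice_size_le:
  assumes n: "2 \<le> n" and T: "T + 1 \<le> n" and m: "m = T div 2 + 1"
    and w: "real w \<le> 2 * log 2 (real n)"
  shows "real (w * (2 + (n div m + 1) * (n + 1)))
           \<le> 16 * (real n ^ 2 * log 2 (real n) / real (T + 1))"
proof -
  define x where "x = real n / real (T + 1)"
  have x1: "1 \<le> x" unfolding x_def using T by simp
  have "real (n div m) \<le> real n / real m" by (rule of_nat_div_le_of_nat)
  also have "\<dots> = 2 * real n / (2 * real m)" by simp
  also have "\<dots> \<le> 2 * real n / real (T + 1)"
    by (rule divide_left_mono) (use m in auto)
  finally have "real (n div m) + 1 \<le> 3 * x" using x1 unfolding x_def by linarith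
  moreover have "real n + 1 \<le> 2 * real n" using n by simp
  ultimately have "(real (n div m) + 1) * (real n + 1) \<le> (3 * x) * (2 * real n)"
    by (intro mult_mono) auto
  moreover have "1 \<le> x * real n" using mult_mono[of 1 x 1 "real n"] x1 n by simp
  ultimately have "real (2 + (n div m + 1) * (n + 1)) \<le> 8 * x * real n" by (simp add: algebra_simps)
  then have "real (w * (2 + (n div m + 1) * (n + 1))) \<le> (2 * log 2 (real n)) * (8 * x * real n)"
    using w n by (simp only: of_nat_mult) (intro mult_mono, auto)
  also have "\<dots> = 16 * (real n ^ 2 * log 2 (real n) / real (T + 1))"
    unfolding x_def by (simp add: field_simps power2_eq_square)
  finally show ?thesis .
qed

theorem min_advice_labeled_TR_le:
  assumes n: "2 \<le> n" and TD: "T < D" and Dn: "D < n"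
  shows "real (min_advice labeled_TR (graph_class n D) T)
           \<le> 16 * (real n ^ 2 * log 2 (real n) / real (T + 1))"
proof -
  obtain w where w: "n < 2 ^ w" "real w \<le> 2 * log 2 (real n)" using exists_bit_width[OF n] .
  define m where "m = T div 2 + 1"
  have "min_advice labeled_TR (graph_class n D) T \<le> w * (2 + (n div m + 1) * (n + 1))"
    using graph_class_labeled_TR_residue[OF _ TD Dn m_def w(1)] n by (intro min_advice_le) auto
  then have "real (min_advice labeled_TR (graph_class n D) T)
      \<le> real (w * (2 + (n div m + 1) * (n + 1)))"
    by linarith
  also have "\<dots> \<le> 16 * (real n ^ 2 * log 2 (real n) / real (T + 1))"
    using residue_advice_size_le[OF n _ m_def w(2)] TD Dn by simp
  finally show ?thesis .
qed

lemma anon_TR_solvable: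
  assumes "0 < n" "T < D" "D < n"
  shows "\<exists>s A. \<forall>G \<in> graph_class n D.
           \<exists>adv. advice_size G adv \<le> s \<and> anon_TR A G adv T"
  using graph_class_labeled_TR_residue[OF assms refl less_exp] labeled_TR_imp_anon_TR
  by blast

section \<open>Lower bound\<close>

(* Nodes 0, ..., D-1 form a path whose end D-1 (the hub) is joined to every node of the clique
   D, ..., n-1.  At a clique node u, port 0 leads to the hub and port i \<ge> 1 to the clique node
   clique_node D u (P u i), where clique_node D u enumerates the other clique nodes. *)
definition path_deg :: "nat \<Rightarrow> nat \<Rightarrow> nat \<Rightarrow> nat" where
  "path_deg n D u =
     (if u < D - 1 then (if u = 0 then 1 else 2) else (n - D) + (if 2 \<le> D then 1 else 0))"

definition path_nbr :: "nat \<Rightarrow> nat \<Rightarrow> nat \<Rightarrow> nat \<Rightarrow> nat" where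
  "path_nbr n D u i =
     (if u < D - 1 then (if i = 0 then u + 1 else u - 1) else (if i < n - D then D + i else D - 2))"

definition clique_node :: "nat \<Rightarrow> nat \<Rightarrow> nat \<Rightarrow> nat" where
  "clique_node D u j = (if D + j - 1 < u then D + j - 1 else D + j)"

definition lollipop :: "nat \<Rightarrow> nat \<Rightarrow> (nat \<Rightarrow> nat \<Rightarrow> nat) \<Rightarrow> pgraph"
  where
  "lollipop n D P = \<lparr>pg_n = n,
     pg_deg = (\<lambda>u. if u < D then path_deg n D u else if u < n then n - D else 0),
     pg_nbr = (\<lambda>u i. if u < D then path_nbr n D u i
                  else if u < n then (if i = 0 then D - 1 else clique_node D u (P u i)) else 0)\<rparr>"

definition lollipop_perms :: "nat \<Rightarrow> nat \<Rightarrow> (nat \<Rightarrow> nat \<Rightarrow> nat) set" where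
  "lollipop_perms n D = (\<Pi>\<^sub>E u \<in> {D..<n}. {p. p permutes {1..<n - D}})"

lemma clique_node_range:
  assumes "D \<le> u" "u < n" "1 \<le> j" "j < n - D"
  shows "D \<le> clique_node D u j" "clique_node D u j < n" "clique_node D u j \<noteq> u"
  using assms unfolding clique_node_def by auto

lemma inj_on_clique_node: "inj_on (clique_node D u) {1..<k}"
  unfolding clique_node_def inj_on_def by (auto split: if_splits)

lemma clique_node_surj:
  assumes "D \<le> u" "u < n" "D \<le> y" "y < n" "y \<noteq> u"
  shows "\<exists>j \<in> {1..<n - D}. clique_node D u j = y"
proof (cases "y < u")
  case True
  then show ?thesis using assms by (intro bexI[of _ "y - D + 1"]) (auto simp: clique_node_def)
next
  case False
  then show ?thesis using assms by (intro bexI[of _ "y - D"]) (auto simp: clique_node_def)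
qed

lemma pg_n_lollipop [simp]: "pg_n (lollipop n D P) = n"
  by (simp add: lollipop_def)

locale lollipop_family =
  fixes n D :: nat and P :: "nat \<Rightarrow> nat \<Rightarrow> nat"
  assumes D1: "1 \<le> D" and Dn: "D < n" and P: "P \<in> lollipop_perms n D"
begin

abbreviation "G \<equiv> lollipop n D P"

lemma perm_permutes: "D \<le> u \<Longrightarrow> u < n \<Longrightarrow> P u permutes {1..<n - D}"
  using P unfolding lollipop_perms_def by auto

lemma perm_in:
  "D \<le> u \<Longrightarrow> u < n \<Longrightarrow> 1 \<le> i \<Longrightarrow> i < n - D \<Longrightarrow> 1 \<le> P u i \<and> P u i < n - D"
  using permutes_in_image[OF perm_permutes] by auto

lemma lollipop_deg_path: "u < D \<Longrightarrow> pg_deg G u = path_deg n D u"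
  by (simp add: lollipop_def)

lemma lollipop_deg_clique: "D \<le> u \<Longrightarrow> u < n \<Longrightarrow> pg_deg G u = n - D"
  by (simp add: lollipop_def)

lemma lollipop_nbr_path: "u < D \<Longrightarrow> pg_nbr G u i = path_nbr n D u i"
  by (simp add: lollipop_def)

lemma lollipop_nbr_clique:
  "D \<le> u \<Longrightarrow> u < n \<Longrightarrow> pg_nbr G u i = (if i = 0 then D - 1 else clique_node D u (P u i))"
  by (simp add: lollipop_def)

lemmas lollipop_path_defs = lollipop_deg_path lollipop_nbr_path path_deg_def path_nbr_def

lemma adj_lollipopI:
  "u < n \<Longrightarrow> i < pg_deg G u \<Longrightarrow> pg_nbr G u i = v \<Longrightarrow> v < n \<Longrightarrow> adj G u v"
  unfolding adj_def by auto

lemma adj_path_up: "a + 1 < D \<Longrightarrow> adj G a (a + 1)"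
  using Dn by (intro adj_lollipopI[of a 0]) (auto simp: lollipop_path_defs)

lemma adj_path_down: "a + 1 < D \<Longrightarrow> adj G (a + 1) a"
proof (cases "a + 1 < D - 1")
  case True
  assume "a + 1 < D"
  then show ?thesis using True Dn
    by (intro adj_lollipopI[of "a+1" 1]) (auto simp: lollipop_path_defs)
next
  case False
  assume "a + 1 < D"
  then have "a + 1 = D - 1" "2 \<le> D" using False by auto
  then show ?thesis using Dn
    by (intro adj_lollipopI[of "a+1" "n - D"]) (auto simp: lollipop_path_defs)
qed

lemma adj_hub_clique: "D \<le> x \<Longrightarrow> x < n \<Longrightarrow> adj G (D - 1) x"
  using Dn D1 by (intro adj_lollipopI[of "D - 1" "x - D"]) (auto simp: lollipop_path_defs)

lemma adj_clique_hub: "D \<le> x \<Longrightarrow> x < n \<Longrightarrow> adj G x (D - 1)"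
  using Dn D1 by (intro adj_lollipopI[of x 0]) (auto simp: lollipop_deg_clique lollipop_nbr_clique)

lemma adj_clique_clique:
  assumes "D \<le> x" "x < n" "D \<le> y" "y < n" "x \<noteq> y"
  shows "adj G x y"
proof -
  obtain j where j: "j \<in> {1..<n - D}" "clique_node D x j = y"
    using clique_node_surj[of D x n y] assms by auto
  have pp: "P x permutes {1..<n - D}" using perm_permutes assms(1,2) .
  define i where "i = inv (P x) j"
  have i: "i \<in> {1..<n - D}" "P x i = j"
    unfolding i_def using permutes_in_image[OF permutes_inv[OF pp]] j(1) permutes_inverses(1)[OF pp]
    by auto
  show ?thesis
    using i j assms by (intro adj_lollipopI[of x i]) (auto simp: lollipop_deg_clique lollipop_nbr_clique)
qed

lemma relpowp_path:
  assumes "a \<le> b" "b < D"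
  shows "(adj G ^^ (b - a)) a b \<and> (adj G ^^ (b - a)) b a"
  using assms
proof (induction b rule: dec_induct)
  case base then show ?case by simp
next
  case (step b)
  then have s: "Suc b - a = Suc (b - a)" by simp
  have a1: "adj G b (Suc b)" "adj G (Suc b) b" using adj_path_up adj_path_down step by auto
  have "b < D" using step.prems by simp
  then have ih: "(adj G ^^ (b - a)) a b" "(adj G ^^ (b - a)) b a" using step.IH by auto
  have "(adj G ^^ Suc (b - a)) a (Suc b)" using ih(1) a1(1) by (rule relpowp_Suc_I)
  moreover have "(adj G ^^ Suc (b - a)) (Suc b) a" using a1(2) ih(2) by (rule relpowp_Suc_I2)
  ultimately show ?case unfolding s by blast
qed

lemma relpowp_path_clique:
  assumes "a < D" "D \<le> x" "x < n"
  shows "(adj G ^^ (D - a)) a x \<and> (adj G ^^ (D - a)) x a"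
proof -
  have w: "(adj G ^^ (D - 1 - a)) a (D - 1) \<and> (adj G ^^ (D - 1 - a)) (D - 1) a"
    using relpowp_path[of a "D - 1"] assms by auto
  have e: "D - a = Suc (D - 1 - a)" using assms by simp
  have "(adj G ^^ Suc (D - 1 - a)) a x"
    using conjunct1[OF w] adj_hub_clique[OF assms(2,3)] by (rule relpowp_Suc_I)
  moreover have "(adj G ^^ Suc (D - 1 - a)) x a"
    using adj_clique_hub[OF assms(2,3)] conjunct2[OF w] by (rule relpowp_Suc_I2)
  ultimately show ?thesis unfolding e by blast
qed

lemma lollipop_nbr:
  assumes "u < n" "i < pg_deg G u"
  shows "pg_nbr G u i < n" "pg_nbr G u i \<noteq> u"
proof -
  have "pg_nbr G u i < n \<and> pg_nbr G u i \<noteq> u"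
  proof (cases "u < D")
    case True
    then show ?thesis using assms Dn D1 by (auto simp: lollipop_path_defs split: if_splits)
  next
    case False
    then have u: "D \<le> u" by simp
    show ?thesis
    proof (cases "i = 0")
      case True
      have "D - 1 < n" "D - 1 \<noteq> u" using u Dn D1 by auto
      then show ?thesis using True u assms by (simp add: lollipop_nbr_clique)
    next
      case False
      then have "1 \<le> P u i" "P u i < n - D"
        using perm_in[OF u assms(1)] assms u by (auto simp: lollipop_deg_clique)
      then show ?thesis
        using clique_node_range[OF u assms(1)] u assms False by (simp add: lollipop_nbr_clique)
    qed
  qed
  then show "pg_nbr G u i < n" "pg_nbr G u i \<noteq> u" by auto
qed

lemma inj_on_lollipop_nbr:
  assumes "u < n" shows "inj_on (pg_nbr G u) {..<pg_deg G u}"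
proof (cases "u < D")
  case True
  then show ?thesis using assms unfolding inj_on_def
    by (auto simp: lollipop_path_defs split: if_splits)
next
  case False
  then have u: "D \<le> u" by simp
  have pp: "P u permutes {1..<n - D}" using perm_permutes[OF u assms] .
  have "inj_on (clique_node D u \<circ> P u) {1..<n - D}"
    using comp_inj_on[OF permutes_inj_on[OF pp], where A = "{1..<n - D}" and g = "clique_node D u"]
    unfolding permutes_image[OF pp] using inj_on_clique_node by blast
  then have "inj_on (pg_nbr G u) {1..<n - D}"
    by (rule inj_on_cong[THEN iffD1, rotated]) (simp add: lollipop_nbr_clique[OF u assms])
  moreover have "pg_nbr G u 0 \<notin> pg_nbr G u ` {1..<n - D}"
    using clique_node_range(1)[OF u assms] perm_in[OF u assms] D1
    by (force simp: lollipop_nbr_clique[OF u assms])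
  moreover have "{..<pg_deg G u} = insert 0 {1..<n - D}"
    using u assms Dn by (auto simp: lollipop_deg_clique)
  ultimately show ?thesis by simp
qed

lemma adj_lollipop_top:
  assumes "D - 1 \<le> u" "D - 1 \<le> v" "u < n" "v < n" "u \<noteq> v"
  shows "adj G u v"
  using assms adj_hub_clique[of v] adj_clique_hub[of u] adj_clique_clique[of u v]
  by (cases "u = D - 1"; cases "v = D - 1") auto

lemma adj_lollipopD:
  assumes "adj G u v"
  shows "u + 1 = v \<or> v + 1 = u \<or> (D - 1 \<le> u \<and> D - 1 \<le> v)"
proof -
  obtain i where i: "u < n" "i < pg_deg G u" "pg_nbr G u i = v" using assms unfolding adj_def by auto
  show ?thesis
  proof (cases "u < D")
    case True
    then show ?thesis using i
      by (auto simp: lollipop_path_defs split: if_splits)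
  next
    case False
    then show ?thesis using i by (auto simp: lollipop_nbr_clique clique_node_def)
  qed
qed

lemma adj_lollipop_sym:
  assumes "adj G u v" shows "adj G v u"
proof -
  obtain i where i: "u < n" "i < pg_deg G u" "pg_nbr G u i = v" using assms unfolding adj_def by auto
  then have "v < n" "v \<noteq> u" using lollipop_nbr by auto
  then show ?thesis
    using adj_lollipopD[OF assms] adj_path_up[of v] adj_path_down[of u] adj_lollipop_top[of v u] i(1)
    by (cases "u < D"; cases "v < D") auto
qed

lemma rtranclp_lollipop_0:
  assumes "u < n" shows "(adj G)\<^sup>*\<^sup>* u 0 \<and> (adj G)\<^sup>*\<^sup>* 0 u"
proof (cases "u < D")
  case True
  then show ?thesis using relpowp_path[of 0 u] by (auto intro: relpowp_imp_rtranclp)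
next
  case False
  then show ?thesis using relpowp_path_clique[of 0 u] assms D1 by (auto intro: relpowp_imp_rtranclp)
qed

lemma wf_pgraph_lollipop: "wf_pgraph G"
  unfolding wf_pgraph_def connected_pg_def
proof (intro conjI allI impI)
  show "\<And>u i. u < pg_n G \<Longrightarrow> i < pg_deg G u \<Longrightarrow> pg_nbr G u i < pg_n G" using lollipop_nbr by simp
  show "\<And>u i. u < pg_n G \<Longrightarrow> i < pg_deg G u \<Longrightarrow> pg_nbr G u i \<noteq> u" using lollipop_nbr by simp
  show "\<And>u. u < pg_n G \<Longrightarrow> inj_on (pg_nbr G u) {..<pg_deg G u}" using inj_on_lollipop_nbr by simp
  show "\<And>u i. u < pg_n G \<Longrightarrow> i < pg_deg G u \<Longrightarrow> \<exists>j<pg_deg G (pg_nbr G u i). pg_nbr G (pg_nbr G u i) j = u"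
    using adj_lollipop_sym adj_lollipopI unfolding adj_def by (metis pg_n_lollipop lollipop_nbr(1))
  show "\<And>u v. u < pg_n G \<Longrightarrow> v < pg_n G \<Longrightarrow> (adj G)\<^sup>*\<^sup>* u v"
  proof -
    fix u v assume "u < pg_n G" "v < pg_n G"
    then have "(adj G)\<^sup>*\<^sup>* u 0" "(adj G)\<^sup>*\<^sup>* 0 v" using rtranclp_lollipop_0 by auto
    then show "(adj G)\<^sup>*\<^sup>* u v" by (rule rtranclp_trans)
  qed
qed

lemma adj_lollipop_min_le: "adj G u v \<Longrightarrow> min v D \<le> Suc (min u D)"
  using adj_lollipopD by fastforce

lemma relpowp_lollipop_min_le: "(adj G ^^ j) u v \<Longrightarrow> min v D \<le> j + min u D"
proof (induction j arbitrary: v)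
  case 0 then show ?case by simp
next
  case (Suc j)
  then obtain z where "(adj G ^^ j) u z" "adj G z v" by (auto elim: relpowp_Suc_E)
  then show ?case using Suc.IH adj_lollipop_min_le by fastforce
qed

lemma dist_pg_lollipop_le:
  assumes "u < n" "v < n" shows "dist_pg G u v \<le> D"
proof -
  have "\<exists>d \<le> D. (adj G ^^ d) u v"
  proof (cases "u < D"; cases "v < D")
    assume "u < D" "v < D"
    show ?thesis
    proof (cases "u \<le> v")
      case True
      then show ?thesis using relpowp_path[of u v] \<open>v < D\<close> by (intro exI[of _ "v - u"]) auto
    next
      case False
      then show ?thesis using relpowp_path[of v u] \<open>u < D\<close> by (intro exI[of _ "u - v"]) auto
    qed
  next
    assume "u < D" "\<not> v < D"
    then show ?thesis using relpowp_path_clique[of u v] assms by (intro exI[of _ "D - u"]) auto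
  next
    assume "\<not> u < D" "v < D"
    then show ?thesis using relpowp_path_clique[of v u] assms by (intro exI[of _ "D - v"]) auto
  next
    assume "\<not> u < D" "\<not> v < D"
    show ?thesis
    proof (cases "u = v")
      case True then show ?thesis by (intro exI[of _ 0]) auto
    next
      case False
      then have "adj G u v" using adj_clique_clique \<open>\<not> u < D\<close> \<open>\<not> v < D\<close> assms by simp
      then show ?thesis using D1 by (intro exI[of _ 1]) auto
    qed
  qed
  then show ?thesis using dist_pg_le by (meson le_trans)
qed

lemma diameter_pg_lollipop: "diameter_pg G = D"
proof (rule diameter_pg_eqI)
  have "(adj G ^^ dist_pg G 0 D) 0 D" using relpowp_dist_pg[OF wf_pgraph_lollipop] Dn by simp
  from relpowp_lollipop_min_le[OF this] show "dist_pg G 0 D = D"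
    using dist_pg_lollipop_le[of 0 D] Dn by simp
qed (use Dn dist_pg_lollipop_le in auto)

lemma lollipop_in_graph_class: "G \<in> graph_class n D"
  unfolding graph_class_def using wf_pgraph_lollipop diameter_pg_lollipop by simp

end

lemma lollipop_path_deg_eq: "x < D \<Longrightarrow> pg_deg (lollipop n D P1) x = pg_deg (lollipop n D P2) x"
  by (simp add: lollipop_def)

lemma lollipop_path_nbr_eq: "x < D \<Longrightarrow> pg_nbr (lollipop n D P1) x = pg_nbr (lollipop n D P2) x"
  by (simp add: lollipop_def)

lemma run_lollipop_eq_near_0:
  assumes adv: "\<forall>u \<le> T. adv1 u = adv2 u" and TD: "T < D" and vt: "v + t \<le> T"
  shows "run A (lollipop n D P1) adv1 t v = run A (lollipop n D P2) adv2 t v"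
  using vt
proof (induction t arbitrary: v)
  case 0
  then show ?case using adv TD by (simp add: lollipop_def)
next
  case (Suc t)
  let ?G1 = "lollipop n D P1" and ?G2 = "lollipop n D P2"
  have vD: "v < D - 1" using Suc.prems TD by linarith
  have dg: "pg_deg ?G1 v = pg_deg ?G2 v" and nb: "pg_nbr ?G1 v = pg_nbr ?G2 v"
    using vD lollipop_path_deg_eq lollipop_path_nbr_eq by simp_all
  have nbi: "pg_nbr ?G1 v i + t \<le> T \<and> pg_nbr ?G1 v i < D" for i
    using vD Suc.prems TD by (auto simp: lollipop_def path_nbr_def)
  have "rport ?G1 v i = rport ?G2 v i" for i
    using nbi[of i] lollipop_path_deg_eq[of "pg_nbr ?G2 v i" D n P1 P2]
      lollipop_path_nbr_eq[of "pg_nbr ?G2 v i" D n P1 P2] unfolding rport_def nb by simp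
  moreover have "run A ?G1 adv1 t (pg_nbr ?G1 v i) = run A ?G2 adv2 t (pg_nbr ?G2 v i)" for i
    using Suc.IH nbi nb by metis
  moreover have "run A ?G1 adv1 t v = run A ?G2 adv2 t v" using Suc.IH Suc.prems by simp
  ultimately show ?case using dg by simp
qed

lemma lollipop_nbr_eq_imp_perms_eq:
  assumes P1: "P1 \<in> lollipop_perms n D" and P2: "P2 \<in> lollipop_perms n D"
    and eq: "\<forall>u < n. \<forall>i < pg_deg (lollipop n D P1) u.
               pg_nbr (lollipop n D P1) u i = pg_nbr (lollipop n D P2) u i"
  shows "P1 = P2"
proof (intro ext)
  fix u i
  show "P1 u i = P2 u i"
  proof (cases "u \<in> {D..<n}")
    case False
    then show ?thesis
      using PiE_arb[OF P1[unfolded lollipop_perms_def]] PiE_arb[OF P2[unfolded lollipop_perms_def]] by simp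
  next
    case u: True
    have pp: "P1 u permutes {1..<n - D}" "P2 u permutes {1..<n - D}"
      using P1 P2 u unfolding lollipop_perms_def by auto
    show ?thesis
    proof (cases "i \<in> {1..<n - D}")
      case False
      then show ?thesis using permutes_not_in[OF pp(1)] permutes_not_in[OF pp(2)] by simp
    next
      case i: True
      then have "i < pg_deg (lollipop n D P1) u" using u by (simp add: lollipop_def)
      then have "pg_nbr (lollipop n D P1) u i = pg_nbr (lollipop n D P2) u i" using eq u by simp
      then have "clique_node D u (P1 u i) = clique_node D u (P2 u i)"
        using u i by (simp add: lollipop_def)
      moreover have "P1 u i \<in> {1..<n - D}" "P2 u i \<in> {1..<n - D}"
        using permutes_in_image[OF pp(1)] permutes_in_image[OF pp(2)] i by auto
      ultimately show ?thesis using inj_on_clique_node[of D u "n - D"] unfolding inj_on_def by blast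
    qed
  qed
qed

lemma pg_iso_permutes:
  assumes wf: "wf_pgraph G" and iso: "pg_iso G H f"
  obtains g where "g permutes {..<pg_n G}" "pg_iso G H g"
proof
  define g where "g x = (if x < pg_n G then f x else x)" for x
  have "bij_betw f {..<pg_n G} {..<pg_n G}" using iso unfolding pg_iso_def by auto
  then have bij: "bij_betw g {..<pg_n G} {..<pg_n G}"
    by (rule bij_betw_cong[THEN iffD1, rotated]) (simp add: g_def)
  then show "g permutes {..<pg_n G}" by (rule bij_imp_permutes) (simp add: g_def)
  show "pg_iso G H g"
    using iso bij wf_pgraph_nbr[OF wf] unfolding pg_iso_def g_def by simp
qed

lemma pg_iso_same_nbr:
  assumes wf: "wf_pgraph G1" "wf_pgraph G2"
    and iso: "pg_iso G1 H f" "pg_iso G2 H f" and u: "u < pg_n G1" and i: "i < pg_deg G1 u"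
  shows "i < pg_deg G2 u" "pg_nbr G1 u i = pg_nbr G2 u i"
proof -
  have n: "pg_n G2 = pg_n G1" using iso unfolding pg_iso_def by simp
  have inj: "inj_on f {..<pg_n G1}" using iso(1) unfolding pg_iso_def bij_betw_def by blast
  have c1: "pg_deg H (f u) = pg_deg G1 u" "\<forall>i < pg_deg G1 u. pg_nbr H (f u) i = f (pg_nbr G1 u i)"
    using iso(1) u unfolding pg_iso_def by blast+
  have c2: "pg_deg H (f u) = pg_deg G2 u" "\<forall>i < pg_deg G2 u. pg_nbr H (f u) i = f (pg_nbr G2 u i)"
    using iso(2) u n unfolding pg_iso_def by auto
  show i2: "i < pg_deg G2 u" using i c1(1) c2(1) by simp
  have "f (pg_nbr G1 u i) = f (pg_nbr G2 u i)" using c1(2) c2(2) i i2 by metis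
  moreover have "pg_nbr G1 u i < pg_n G1" "pg_nbr G2 u i < pg_n G1"
    using wf_pgraph_nbr(1)[OF wf(1) u i] wf_pgraph_nbr(1)[OF wf(2) _ i2] u n by auto
  ultimately show "pg_nbr G1 u i = pg_nbr G2 u i" using inj unfolding inj_on_def by blast
qed

lemma length_le_advice_size: "u < pg_n G \<Longrightarrow> length (adv u) \<le> advice_size G adv"
  unfolding advice_size_def by (simp add: Max_ge)

lemma card_bool_lists_length_le: "card {xs :: bool list. length xs \<le> s} \<le> 2 ^ (s + 1)"
proof -
  have "card {xs :: bool list. length xs \<le> s} = (\<Sum>i\<le>s. 2 ^ i)"
    using card_lists_length_le[of "UNIV :: bool set" s] by simp
  also have "\<dots> \<le> (2::nat) ^ (s + 1)"
    by (induction s) auto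
  finally show ?thesis .
qed

lemma lollipop_output_permutes:
  assumes fam: "lollipop_family n D P" and solves: "anon_TR A (lollipop n D P) adv T"
  obtains g where "g permutes {..<n}"
    "pg_iso (lollipop n D P) (fst (node_output A (lollipop n D P) adv T 0)) g"
proof -
  have "0 < pg_n (lollipop n D P)" using lollipop_family.Dn[OF fam] by simp
  then obtain f where "pg_iso (lollipop n D P) (fst (node_output A (lollipop n D P) adv T 0)) f"
    using solves unfolding anon_TR_def by blast
  with pg_iso_permutes[OF lollipop_family.wf_pgraph_lollipop[OF fam]] obtain g
    where "g permutes {..<pg_n (lollipop n D P)}"
      "pg_iso (lollipop n D P) (fst (node_output A (lollipop n D P) adv T 0)) g" .
  with that show ?thesis by simp
qed

(* Node 0 sees the same advice on both graphs, so it produces the same output, to which both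
   graphs are isomorphic via g. *)
lemma lollipop_perms_determined_by_view:
  assumes fam: "lollipop_family n D P1" "lollipop_family n D P2" and TD: "T < D"
    and adv: "\<forall>u \<le> T. adv1 u = adv2 u"
    and iso: "pg_iso (lollipop n D P1) (fst (node_output A (lollipop n D P1) adv1 T 0)) g"
      "pg_iso (lollipop n D P2) (fst (node_output A (lollipop n D P2) adv2 T 0)) g"
  shows "P1 = P2"
proof -
  have "node_output A (lollipop n D P1) adv1 T 0 = node_output A (lollipop n D P2) adv2 T 0"
    unfolding node_output_def using run_lollipop_eq_near_0[OF adv TD, of 0 T A n P1 P2] by simp
  then have iso2: "pg_iso (lollipop n D P2) (fst (node_output A (lollipop n D P1) adv1 T 0)) g"
    using iso(2) by simp
  have "pg_nbr (lollipop n D P1) u i = pg_nbr (lollipop n D P2) u i"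
    if "u < n" "i < pg_deg (lollipop n D P1) u" for u i
    using pg_iso_same_nbr(2)[OF lollipop_family.wf_pgraph_lollipop[OF fam(1)]
        lollipop_family.wf_pgraph_lollipop[OF fam(2)] iso(1) iso2] that
    by simp
  then show ?thesis
    using lollipop_nbr_eq_imp_perms_eq lollipop_family.P[OF fam(1)] lollipop_family.P[OF fam(2)]
    by blast
qed

lemma card_lollipop_perms_le:
  assumes D1: "1 \<le> D" and Dn: "D < n" and TD: "T < D"
    and solves: "\<forall>P \<in> lollipop_perms n D. \<exists>adv. advice_size (lollipop n D P) adv \<le> s
                   \<and> anon_TR A (lollipop n D P) adv T"
  shows "card (lollipop_perms n D) \<le> (2 ^ (s + 1)) ^ (T + 1) * fact n"
proof -
  let ?PS = "lollipop_perms n D"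
  have fam: "lollipop_family n D P" if "P \<in> ?PS" for P
    using D1 Dn that by (rule lollipop_family.intro)
  obtain advP where advP: "\<forall>P \<in> ?PS. advice_size (lollipop n D P) (advP P) \<le> s
      \<and> anon_TR A (lollipop n D P) (advP P) T"
    using bchoice[OF solves] by blast
  have "\<forall>P \<in> ?PS. \<exists>g. g permutes {..<n}
      \<and> pg_iso (lollipop n D P) (fst (node_output A (lollipop n D P) (advP P) T 0)) g"
    using lollipop_output_permutes fam advP by metis
  from bchoice[OF this] obtain g where g: "\<forall>P \<in> ?PS. g P permutes {..<n}
      \<and> pg_iso (lollipop n D P) (fst (node_output A (lollipop n D P) (advP P) T 0)) (g P)"
    by blast
  define Bs where "Bs = {xs :: bool list. length xs \<le> s}"
  have finB: "finite Bs" unfolding Bs_def using finite_lists_length_le[of "UNIV :: bool set" s] by simp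
  define \<Phi> where "\<Phi> P = (map (advP P) [0..<Suc T], g P)" for P
  have "inj_on \<Phi> ?PS"
  proof (rule inj_onI)
    fix P1 P2 assume P1: "P1 \<in> ?PS" and P2: "P2 \<in> ?PS" and "\<Phi> P1 = \<Phi> P2"
    then have "\<forall>u \<le> T. advP P1 u = advP P2 u" and "g P1 = g P2"
      unfolding \<Phi>_def by (auto simp: map_eq_conv)
    then show "P1 = P2"
      using lollipop_perms_determined_by_view[OF fam[OF P1] fam[OF P2] TD] g P1 P2 by metis
  qed
  moreover have "\<Phi> ` ?PS \<subseteq> {xs. set xs \<subseteq> Bs \<and> length xs = Suc T} \<times> {p. p permutes {..<n}}"
  proof
    fix y assume "y \<in> \<Phi> ` ?PS"
    then obtain P where P: "P \<in> ?PS" "y = \<Phi> P" by blast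
    have "advice_size (lollipop n D P) (advP P) \<le> s" using advP P(1) by blast
    then have "length (advP P u) \<le> s" if "u < Suc T" for u
      using length_le_advice_size[of u "lollipop n D P" "advP P"] that TD Dn by simp
    then show "y \<in> {xs. set xs \<subseteq> Bs \<and> length xs = Suc T} \<times> {p. p permutes {..<n}}"
      using g P unfolding \<Phi>_def Bs_def by auto
  qed
  moreover have "finite ({xs. set xs \<subseteq> Bs \<and> length xs = Suc T} \<times> {p. p permutes {..<n::nat}})"
    using finite_lists_length_eq[OF finB] finite_permutations[of "{..<n}"] by simp
  ultimately have "card ?PS \<le> card ({xs. set xs \<subseteq> Bs \<and> length xs = Suc T} \<times> {p. p permutes {..<n}})"
    by (rule card_inj_on_le)
  also have "\<dots> = card Bs ^ Suc T * fact n"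
    by (simp add: card_cartesian_product card_lists_length_eq[OF finB] card_permutations)
  also have "\<dots> \<le> (2 ^ (s + 1)) ^ (T + 1) * fact n"
  proof (rule mult_right_mono)
    show "card Bs ^ Suc T \<le> (2 ^ (s + 1)) ^ (T + 1)"
      using power_mono[OF card_bool_lists_length_le[of s], of "Suc T"] unfolding Bs_def by simp
  qed simp
  finally show ?thesis .
qed

lemma pow_diff_le_fact: "j \<le> K \<Longrightarrow> j ^ (K - j) \<le> fact K"
proof (induction K rule: dec_induct)
  case base then show ?case by simp
next
  case (step K)
  have "j ^ (Suc K - j) = j * j ^ (K - j)" using step.hyps by (simp add: Suc_diff_le)
  also have "\<dots> \<le> Suc K * fact K" using step.IH step.hyps by (intro mult_mono) auto
  finally show ?case by simp
qed

lemma log_fact_ge: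
  assumes m: "4 \<le> m"
  shows "real m / 4 * log 2 (real m / 4) \<le> log 2 (fact (m - 1))"
proof -
  define K where "K = m - 1"
  define j where "j = K div 2"
  have j4: "real m / 4 \<le> real j" and Kj: "real m / 4 \<le> real (K - j)"
    unfolding j_def K_def using m by linarith+
  have j1: "1 \<le> real j" using j4 m by linarith
  have "real (j ^ (K - j)) \<le> real (fact K)"
    using pow_diff_le_fact[of j K] unfolding j_def by (simp only: of_nat_le_iff)
  then have "log 2 (real j ^ (K - j)) \<le> log 2 (fact K)" using j1 by (subst log_le_cancel_iff) auto
  then have a: "real (K - j) * log 2 (real j) \<le> log 2 (fact K)" using j1 by (simp add: log_nat_power)
  have "log 2 (real m / 4) \<le> log 2 (real j)" using j4 m by (subst log_le_cancel_iff) auto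
  then have "real m / 4 * log 2 (real m / 4) \<le> real (K - j) * log 2 (real j)"
    using Kj m by (intro mult_mono) auto
  then show ?thesis using a unfolding K_def by linarith
qed

lemma card_lollipop_perms: "card (lollipop_perms n D) = fact (n - D - 1) ^ (n - D)"
proof -
  have "card (lollipop_perms n D) = (\<Prod>u\<in>{D..<n}. card {p. p permutes {1..<n - D}})"
    unfolding lollipop_perms_def by (rule card_PiE) simp
  also have "\<dots> = (\<Prod>u\<in>{D..<n}. fact (n - D - 1))"
    by (intro prod.cong refl card_permutations) auto
  finally show ?thesis by simp
qed

lemma log_card_lollipop_perms_le:
  assumes c: "card (lollipop_perms n D) \<le> (2 ^ (s + 1)) ^ (T + 1) * fact n" and n: "0 < n"
  shows "real (n - D) * log 2 (fact (n - D - 1))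
           \<le> real ((s + 1) * (T + 1)) + real n * log 2 (real n)"
proof -
  define m where "m = n - D"
  have "fact (m - 1) ^ m \<le> 2 ^ ((s + 1) * (T + 1)) * (fact n :: nat)"
    using c unfolding card_lollipop_perms m_def by (simp only: power_mult)
  then have "real (fact (m - 1) ^ m) \<le> real (2 ^ ((s + 1) * (T + 1)) * fact n)"
    by (simp only: of_nat_le_iff)
  then have "(fact (m - 1) :: real) ^ m \<le> 2 ^ ((s + 1) * (T + 1)) * fact n" by simp
  then have "log 2 ((fact (m - 1) :: real) ^ m) \<le> log 2 (2 ^ ((s + 1) * (T + 1)) * fact n)"
    by (subst log_le_cancel_iff) auto
  then have "real m * log 2 (fact (m - 1)) \<le> real ((s + 1) * (T + 1)) + log 2 (fact n)"
    by (simp add: log_nat_power log_mult)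
  moreover have "log 2 (fact n :: real) \<le> real n * log 2 (real n)"
  proof -
    have "(fact n :: real) \<le> real n ^ n" using fact_le_power[of n] by simp
    then have "log 2 (fact n :: real) \<le> log 2 (real n ^ n)" by (subst log_le_cancel_iff) (use n in auto)
    then show ?thesis using n by (simp add: log_nat_power)
  qed
  ultimately show ?thesis unfolding m_def by linarith
qed

lemma sq_log_le_log_fact:
  fixes \<beta> :: real
  assumes b: "0 < \<beta>" "\<beta> \<le> 1" and n: "32 \<le> \<beta>^2 * real n"
    and m: "\<beta> * real n \<le> real m"
  shows "\<beta>^2 * real n ^ 2 * log 2 (real n) / 8 \<le> real m * log 2 (fact (m - 1))"
proof -
  define L where "L = log 2 (real n)"
  have "\<beta>^2 * real n \<le> \<beta> * real n" using b n by (simp add: power2_eq_square mult_left_le_one_le)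
  then have bn: "32 \<le> \<beta> * real n" using n by linarith
  moreover have "\<beta> * real n \<le> real n" using b by (simp add: mult_left_le_one_le)
  ultimately have npos: "0 < real n" by linarith
  have m32: "32 \<le> real m" using bn m by linarith
  have "log 2 16 \<le> log 2 (\<beta>^2 * real n)" using n by (subst log_le_cancel_iff) auto
  moreover have "log 2 (16::real) = 4" using log_pow_cancel[of "2::real" 4] by simp
  moreover have "log 2 (\<beta>^2 * real n) = 2 * log 2 \<beta> + L"
    unfolding L_def using b npos by (simp add: log_mult log_nat_power)
  moreover have "log 2 (\<beta> * real n / 4) = log 2 \<beta> + L - 2"
    unfolding L_def using b npos log_pow_cancel[of "2::real" 2] by (simp add: log_mult log_divide)
  moreover have "log 2 (\<beta> * real n / 4) \<le> log 2 (real m / 4)"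
    using m b npos m32 by (subst log_le_cancel_iff) auto
  ultimately have "L / 2 \<le> log 2 (real m / 4)" by linarith
  then have "real m / 4 * (L / 2) \<le> real m / 4 * log 2 (real m / 4)"
    using m32 by (intro mult_left_mono) auto
  also have "\<dots> \<le> log 2 (fact (m - 1))" using log_fact_ge m32 by simp
  finally have "real m * (real m * L / 8) \<le> real m * log 2 (fact (m - 1))"
    using m32 by (intro mult_left_mono) auto
  moreover have "(\<beta> * real n) * (\<beta> * real n) * L \<le> real m * real m * L"
    using m b npos n by (intro mult_right_mono mult_mono) (auto simp: L_def)
  ultimately show ?thesis unfolding L_def by (simp add: power2_eq_square algebra_simps)
qed

lemma advice_ge_of_count:
  fixes \<beta> :: real
  assumes n: "32 \<le> \<beta>^2 * real n" and n2: "2 \<le> n" and T: "T + 1 \<le> n"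
    and count: "\<beta>^2 * real n ^ 2 * log 2 (real n) / 8
                  \<le> real ((s + 1) * (T + 1)) + real n * log 2 (real n)"
  shows "\<beta>^2 / 16 * (real n ^ 2 * log 2 (real n) / real (T + 1)) \<le> real s"
proof -
  define L where "L = log 2 (real n)"
  have L1: "1 \<le> L" unfolding L_def using n2 by (simp add: le_log_iff)
  have "real n * 1 \<le> real n * L" using L1 by (intro mult_left_mono) auto
  then have "real (T + 1) \<le> real n * L" using T by linarith
  then have "\<beta>^2 * real n ^ 2 * L / 8 \<le> real s * real (T + 1) + 2 * (real n * L)"
    using count unfolding L_def[symmetric] by (simp add: algebra_simps)
  moreover have "32 * (real n * L) \<le> (\<beta>^2 * real n) * (real n * L)"
    using n L1 by (intro mult_right_mono) auto
  ultimately have "\<beta>^2 * real n ^ 2 * L / 16 \<le> real s * real (T + 1)"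
    by (simp add: power2_eq_square algebra_simps)
  then show ?thesis unfolding L_def[symmetric] by (simp add: field_simps)
qed

theorem min_advice_anon_TR_ge:
  fixes \<beta> :: real
  assumes b: "0 < \<beta>" "\<beta> \<le> 1" and n: "32 \<le> \<beta>^2 * real n"
    and Dn: "\<beta> * real n \<le> real (n - D)" and TD: "T < D"
  shows "\<beta>^2 / 16 * (real n ^ 2 * log 2 (real n) / real (T + 1))
           \<le> real (min_advice anon_TR (graph_class n D) T)"
proof -
  have "\<beta>^2 * real n \<le> real n" using b by (simp add: mult_left_le_one_le power_le_one)
  then have "2 \<le> n" using n by linarith
  then have "0 < n" by simp
  then have "D < n" using Dn b by (metis diff_is_0_eq' mult_pos_pos not_less of_nat_0 of_nat_0_less_iff)
  then obtain A where A: "\<forall>G \<in> graph_class n D. \<exists>adv.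
      advice_size G adv \<le> min_advice anon_TR (graph_class n D) T \<and> anon_TR A G adv T"
    using anon_TR_solvable[OF \<open>0 < n\<close> TD] min_advice_attained by metis
  have "lollipop n D P \<in> graph_class n D" if "P \<in> lollipop_perms n D" for P
    using TD \<open>D < n\<close> that
    by (intro lollipop_family.lollipop_in_graph_class lollipop_family.intro) auto
  then have "card (lollipop_perms n D)
      \<le> (2 ^ (min_advice anon_TR (graph_class n D) T + 1)) ^ (T + 1) * fact n"
    using A TD \<open>D < n\<close> by (intro card_lollipop_perms_le) auto
  from log_card_lollipop_perms_le[OF this \<open>0 < n\<close>] show ?thesis
    using sq_log_le_log_fact[OF b n Dn] TD \<open>D < n\<close>
    by (intro advice_ge_of_count[OF n \<open>2 \<le> n\<close>]) auto
qed

theorem corollary6p3: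
  fixes \<alpha> :: real
  assumes "0 < \<alpha>" and "\<alpha> < 1"
  shows "\<exists>c1 c2 :: real. \<exists>N :: nat. c1 > 0 \<and> c2 > 0 \<and>
    (\<forall>n D k. n \<ge> N \<and> real D \<le> \<alpha> * real n \<and> 0 < k \<and> k \<le> D \<longrightarrow>
       c1 * (real n ^ 2 * log 2 (real n) / real (D - k + 1))
         \<le> real (min_advice anon_TR (graph_class n D) (D - k)) \<and>
       real (min_advice labeled_TR (graph_class n D) (D - k))
         \<le> c2 * (real n ^ 2 * log 2 (real n) / real (D - k + 1)))"
proof -
  define \<beta> where "\<beta> = 1 - \<alpha>"
  have b: "0 < \<beta>" "\<beta> \<le> 1" unfolding \<beta>_def using assms by auto
  have "\<beta>^2 / 16 * (real n ^ 2 * log 2 (real n) / real (D - k + 1))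
          \<le> real (min_advice anon_TR (graph_class n D) (D - k)) \<and>
        real (min_advice labeled_TR (graph_class n D) (D - k))
          \<le> 16 * (real n ^ 2 * log 2 (real n) / real (D - k + 1))"
    if H: "nat \<lceil>32 / \<beta>^2\<rceil> + 2 \<le> n" "real D \<le> \<alpha> * real n" "0 < k" "k \<le> D" for n D k
  proof -
    have "32 / \<beta>^2 \<le> real n" using H(1) by linarith
    then have n: "2 \<le> n" "32 \<le> \<beta>^2 * real n" using H(1) b by (auto simp: field_simps)
    have "\<alpha> * real n < real n" using assms n(1) by simp
    then have "D < n" using H(2) by linarith
    then have Dn: "\<beta> * real n \<le> real (n - D)"
      using H(2) unfolding \<beta>_def by (simp add: of_nat_diff algebra_simps)
    have T: "D - k < D" using H(3,4) by simp
    show ?thesis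
      using min_advice_anon_TR_ge[OF b n(2) Dn T] min_advice_labeled_TR_le[OF n(1) T \<open>D < n\<close>]
      by simp
  qed
  then show ?thesis
    using b by (intro exI[of _ "\<beta>^2 / 16"] exI[of _ 16] exI[of _ "nat \<lceil>32 / \<beta>^2\<rceil> + 2"]) auto
qed

end
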